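(* Let $\lambda$ be a composition of $n\ge2$. Then $d(U_\lambda,\tilde U_\lambda)\le\frac1n$, where $d$ is the metric of $\mathcal{U}^{(2)}$.
   Context: A composition $\lambda=(\lambda_1,\dots,\lambda_r)$ of $n$ has descent set $D_\lambda=\{\lambda_1,\lambda_1+\lambda_2,\dots,\lambda_1+\dots+\lambda_{r-1}\}$. $\mathcal{U}^{(2)}$ is the set of pairs $(U_\uparrow,U_\downarrow)$ of disjoint open subsets of $]0,1[$ with metric $d((U_\uparrow,U_\downarrow),(V_\uparrow,V_\downarrow))=\max(d_{Haus}(U_\uparrow^c,V_\uparrow^c),d_{Haus}(U_\downarrow^c,V_\downarrow^c))$, complements in $[0,1]$. With $I_s=[\frac{s-1}{n-1},\frac{s}{n-1}]$, $U_\lambda=(\mathrm{int}\bigcup_{s\notin D_\lambda}I_s,\ \mathrm{int}\bigcup_{s\in D_\lambda}I_s)$ ($1\le s\le n-1$). A cell $i\in[1,n]$ is a peak if $i\in D_\lambda\cup\{n\}$ and $i-1\notin D_\lambda$, and a valley if $i\notin D_\lambda$ and $i-1\in D_\lambda\cup\{0\}$; let $1=a_1<\dots<a_{t+1}=n$ be the peaks and valleys. The run paintbox is $\tilde U_\lambda=(\bigcup_{a_i\text{ valley}}]\frac{a_i-1}{n},\frac{a_{i+1}-1}{n}[,\ \bigcup_{a_i\text{ peak}}]\frac{a_i-1}{n},\frac{a_{i+1}-1}{n}[)$, with $a_{i+1}=n+1$ when $a_i=n$. *)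

theory Defs
  imports "HOL-Analysis.Analysis"
begin

definition is_composition :: "nat \<Rightarrow> nat list \<Rightarrow> bool" where
  "is_composition n lam \<longleftrightarrow> (\<forall>x\<in>set lam. 0 < x) \<and> sum_list lam = n"

definition descent_set :: "nat list \<Rightarrow> nat set" where
  "descent_set lam = {sum_list (take k lam) | k. 1 \<le> k \<and> k \<le> length lam - 1}"

definition haus_dist :: "real set \<Rightarrow> real set \<Rightarrow> real" where
  "haus_dist A B = max (SUP a\<in>A. infdist a B) (SUP b\<in>B. infdist b A)"

definition cmpl01 :: "real set \<Rightarrow> real set" where
  "cmpl01 U = {0..1} - U"

definition U2_dist :: "real set \<times> real set \<Rightarrow> real set \<times> real set \<Rightarrow> real" where
  "U2_dist U V = max (haus_dist (cmpl01 (fst U)) (cmpl01 (fst V)))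
                     (haus_dist (cmpl01 (snd U)) (cmpl01 (snd V)))"

definition I_int :: "nat \<Rightarrow> nat \<Rightarrow> real set" where
  "I_int n s = {(real s - 1) / (real n - 1) .. real s / (real n - 1)}"

definition U_comp :: "nat \<Rightarrow> nat list \<Rightarrow> real set \<times> real set" where
  "U_comp n lam =
     (interior (\<Union>s\<in>{s\<in>{1..n-1}. s \<notin> descent_set lam}. I_int n s),
      interior (\<Union>s\<in>{s\<in>{1..n-1}. s \<in> descent_set lam}. I_int n s))"

definition is_peak :: "nat \<Rightarrow> nat list \<Rightarrow> nat \<Rightarrow> bool" where
  "is_peak n lam i \<longleftrightarrow> i \<in> {1..n} \<and> i \<in> descent_set lam \<union> {n}
      \<and> \<not> (1 \<le> i \<and> i - 1 \<in> descent_set lam)"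

definition is_valley :: "nat \<Rightarrow> nat list \<Rightarrow> nat \<Rightarrow> bool" where
  "is_valley n lam i \<longleftrightarrow> i \<in> {1..n} \<and> i \<notin> descent_set lam
      \<and> (1 \<le> i \<and> i - 1 \<in> descent_set lam \<union> {0})"

definition pv_next :: "nat \<Rightarrow> nat list \<Rightarrow> nat \<Rightarrow> nat" where
  "pv_next n lam a = (if a = n then n + 1
      else Min {b. a < b \<and> (is_peak n lam b \<or> is_valley n lam b)})"

definition run_paintbox :: "nat \<Rightarrow> nat list \<Rightarrow> real set \<times> real set" where
  "run_paintbox n lam =
     ((\<Union>a\<in>{a. is_valley n lam a}.
          {(real a - 1) / real n <..< (real (pv_next n lam a) - 1) / real n}),
      (\<Union>a\<in>{a. is_peak n lam a}.
          {(real a - 1) / real n <..< (real (pv_next n lam a) - 1) / real n}))"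

end

theory Submission
  imports Defs
begin

text \<open>Both pairs of sets are interiors of unions of closed cells selected by a labelling:
  \<open>U\<^sub>\<lambda>\<close> uses the \<open>n - 1\<close> cells of width \<open>1/(n-1)\<close>, and the run paintbox uses the
  \<open>n\<close> cells of width \<open>1/n\<close>, its intervals being the maximal runs of equally labelled cells
  between consecutive peaks and valleys. The two labellings agree on the first \<open>n - 1\<close> cells,
  and the last fine cell carries the label opposite to its neighbour. Measured in cell widths,
  a point is interior iff it lies strictly inside a marked cell or on the wall between two
  marked cells. Hence the contraction \<open>x \<mapsto> x (n - 1) / n\<close> maps the complement of the coarse
  interior into that of the fine one, the expansion \<open>y \<mapsto> y n / (n - 1)\<close> maps the fine
  complement within \<open>[0, (n - 1)/n]\<close> back, and both move points by at most \<open>1/n\<close>; the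
  remaining points of \<open>[(n - 1)/n, 1]\<close> are within \<open>1/n\<close> of \<open>1\<close>, which lies in every
  complement.\<close>

lemma haus_dist_le:
  assumes "A \<noteq> {}" "B \<noteq> {}"
    and "\<And>x. x \<in> A \<Longrightarrow> \<exists>y\<in>B. dist x y \<le> r"
    and "\<And>y. y \<in> B \<Longrightarrow> \<exists>x\<in>A. dist y x \<le> r"
  shows "haus_dist A B \<le> r"
proof -
  have "infdist x B \<le> r" if "x \<in> A" for x
    using assms(3)[OF that] infdist_le2 by blast
  moreover have "infdist y A \<le> r" if "y \<in> B" for y
    using assms(4)[OF that] infdist_le2 by blast
  ultimately show ?thesis
    unfolding haus_dist_def using assms(1,2) by (simp add: cSUP_least)
qed

definition marked_cells :: "real \<Rightarrow> (nat \<Rightarrow> bool) \<Rightarrow> nat \<Rightarrow> real set" where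
  "marked_cells d T N = (\<Union>i\<in>{i\<in>{1..N}. T i}. {(real i - 1) / d .. real i / d})"

text \<open>Combinatorial form of \<open>interior (marked_cells 1 T N)\<close>.\<close>
definition in_marked_interior :: "(nat \<Rightarrow> bool) \<Rightarrow> nat \<Rightarrow> real \<Rightarrow> bool" where
  "in_marked_interior T N v \<longleftrightarrow>
     (\<exists>i\<in>{1..N}. T i \<and> real i - 1 < v \<and> v < real i) \<or>
     (\<exists>i\<in>{1..N-1}. T i \<and> T (Suc i) \<and> v = real i)"

lemma in_marked_interiorE:
  assumes "in_marked_interior T N v"
  obtains (cell) i where "i \<in> {1..N}" "T i" "real i - 1 < v" "v < real i"
    | (wall) i where "i \<in> {1..N-1}" "T i" "T (Suc i)" "v = real i"
  using assms unfolding in_marked_interior_def by blast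

lemma not_in_marked_interior_0: "\<not> in_marked_interior T N 0"
  unfolding in_marked_interior_def by auto

lemma not_in_marked_interior_right_end: "\<not> in_marked_interior T N (real N)"
  unfolding in_marked_interior_def by (auto simp: of_nat_diff)

lemma mem_marked_cells:
  assumes "d > 0"
  shows "z \<in> marked_cells d T N \<longleftrightarrow> (\<exists>i\<in>{1..N}. T i \<and> real i - 1 \<le> z * d \<and> z * d \<le> real i)"
  using assms by (auto simp: marked_cells_def field_simps)

lemma cell_subset_marked_cells:
  "i \<in> {1..N} \<Longrightarrow> T i \<Longrightarrow> {(real i - 1) / d .. real i / d} \<subseteq> marked_cells d T N"
  unfolding marked_cells_def by blast

lemma in_marked_interior_imp_interior:
  assumes d: "d > 0" and x: "in_marked_interior T N (x * d)"
  shows "x \<in> interior (marked_cells d T N)"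
  using x
proof (cases rule: in_marked_interiorE)
  case (cell i)
  have "{(real i - 1) / d <..< real i / d} \<subseteq> marked_cells d T N"
    using cell_subset_marked_cells[OF cell(1), of T d] cell(2)
      greaterThanLessThan_subseteq_atLeastAtMost_iff by blast
  moreover have "x \<in> {(real i - 1) / d <..< real i / d}"
    using cell d by (simp add: field_simps)
  ultimately show ?thesis by (rule interiorI[OF open_greaterThanLessThan, rotated])
next
  case (wall i)
  have "i \<in> {1..N}" "Suc i \<in> {1..N}"
    using wall by auto
  then have "{(real i - 1) / d .. real i / d} \<union> {real i / d .. (real i + 1) / d}
               \<subseteq> marked_cells d T N"
    using wall cell_subset_marked_cells[of i N T d] cell_subset_marked_cells[of "Suc i" N T d]
    by (simp add: add.commute)
  moreover have "{(real i - 1) / d <..< (real i + 1) / d}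
                   \<subseteq> {(real i - 1) / d .. real i / d} \<union> {real i / d .. (real i + 1) / d}"
    by (auto simp: not_le)
  ultimately have "{(real i - 1) / d <..< (real i + 1) / d} \<subseteq> marked_cells d T N"
    by (rule order_trans[rotated])
  moreover have "x \<in> {(real i - 1) / d <..< (real i + 1) / d}"
    using wall d by (simp add: field_simps)
  ultimately show ?thesis by (rule interiorI[OF open_greaterThanLessThan, rotated])
qed

text \<open>A wall point \<open>x\<close> of a marked cell is interior only if \<open>x - t\<close> and \<open>x + t\<close>, for \<open>t\<close>
  below the cell width, lie in marked cells; these must be the two neighbouring cells.\<close>
lemma interior_imp_in_marked_interior:
  assumes d: "d > 0" and x: "x \<in> interior (marked_cells d T N)"
  shows "in_marked_interior T N (x * d)"
proof -
  obtain e where e: "e > 0" "ball x e \<subseteq> marked_cells d T N"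
    using x by (auto simp: mem_interior)
  define t where "t = min (e / 2) (1 / (2 * d))"
  have t: "t > 0" "t < e" "t * d < 1" "t * d > 0"
    using e d by (auto simp: t_def min_def field_simps)
  have "x + t \<in> marked_cells d T N" "x - t \<in> marked_cells d T N"
    using e t by (auto simp: dist_real_def)
  then obtain k k' where
    k: "k \<in> {1..N}" "T k" "real k - 1 \<le> x * d + t * d" "x * d + t * d \<le> real k" and
    k': "k' \<in> {1..N}" "T k'" "real k' - 1 \<le> x * d - t * d" "x * d - t * d \<le> real k'"
    using d by (auto simp: mem_marked_cells algebra_simps)
  have "x \<in> marked_cells d T N"
    using e centre_in_ball by blast
  then obtain i where i: "i \<in> {1..N}" "T i" "real i - 1 \<le> x * d" "x * d \<le> real i"
    using d by (auto simp: mem_marked_cells)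
  consider "real i - 1 < x * d \<and> x * d < real i" | "x * d = real i" | "x * d = real i - 1"
    using i by linarith
  then show ?thesis
  proof cases
    case 1
    then show ?thesis using i unfolding in_marked_interior_def by blast
  next
    case 2
    then have "real i < real k" "real k < real i + 2"
      using k t by linarith+
    then have "k = Suc i"
      by linarith
    then show ?thesis
      using k i 2 unfolding in_marked_interior_def by (intro disjI2 bexI[of _ i]) auto
  next
    case 3
    then have "real k' < real i" "real i < real k' + 2"
      using k' t by linarith+
    then have "i = Suc k'"
      by linarith
    then show ?thesis
      using k' i 3 unfolding in_marked_interior_def by (intro disjI2 bexI[of _ k']) auto
  qed
qed

text \<open>Maximal runs of equal labels among the cells \<open>1..n\<close>. The last cell is assumed to start a
  run, so that the set whose minimum defines \<open>next_start\<close> is never empty.\<close>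
locale labelled_runs =
  fixes n :: nat and T :: "nat \<Rightarrow> bool"
    and start :: "nat \<Rightarrow> bool" and next_start :: "nat \<Rightarrow> nat"
  assumes two_le_n: "2 \<le> n"
    and start_iff: "\<And>a. start a \<longleftrightarrow> a \<in> {1..n} \<and> (a = 1 \<or> T a \<noteq> T (a - 1))"
    and next_start_eq: "\<And>a. next_start a = (if a = n then n + 1 else Min {b. a < b \<and> start b})"
    and last_cell_starts_run: "T n \<noteq> T (n - 1)"
begin

definition run_union :: "real set" where
  "run_union = (\<Union>a\<in>{a. start a \<and> T a}.
                  {(real a - 1) / real n <..< (real (next_start a) - 1) / real n})"

lemma start_n: "start n"
  using two_le_n last_cell_starts_run start_iff by auto

lemma next_start:
  assumes "start a"
  shows "a < next_start a" "next_start a \<le> n + 1"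
    and "\<And>b. a < b \<Longrightarrow> b < next_start a \<Longrightarrow> \<not> start b"
    and "next_start a \<le> n \<Longrightarrow> start (next_start a)"
proof -
  let ?S = "{b. a < b \<and> start b}"
  have "a \<le> n"
    using assms start_iff by auto
  have "finite ?S"
    by (rule finite_subset[of _ "{..n}"]) (auto simp: start_iff)
  moreover have "a < n \<Longrightarrow> n \<in> ?S"
    using start_n by auto
  ultimately have "a < n \<Longrightarrow> Min ?S \<in> ?S \<and> Min ?S \<le> n \<and> (\<forall>b\<in>?S. Min ?S \<le> b)"
    by (metis (no_types, lifting) Min_in Min_le empty_iff)
  with \<open>a \<le> n\<close> show "a < next_start a" "next_start a \<le> n + 1"
    and "\<And>b. a < b \<Longrightarrow> b < next_start a \<Longrightarrow> \<not> start b"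
    and "next_start a \<le> n \<Longrightarrow> start (next_start a)"
    by (fastforce simp: next_start_eq)+
qed

lemma label_constant_on_run:
  assumes "start a" "a \<le> c" "c < next_start a"
  shows "T c = T a"
  using assms(2,3)
proof (induction c rule: dec_induct)
  case base
  then show ?case by simp
next
  case (step c)
  have "\<not> start (Suc c)" "Suc c \<le> n"
    using next_start[OF assms(1)] step.hyps step.prems by auto
  then have "T (Suc c) = T c"
    using start_iff by auto
  then show ?case
    using step by simp
qed

lemma run_containing:
  assumes "1 \<le> c" "c \<le> n"
  obtains a where "start a" "a \<le> c" "c < next_start a"
proof -
  let ?S = "{b. b \<le> c \<and> start b}"
  define a where "a = Max ?S"
  have "1 \<in> ?S"
    using assms two_le_n start_iff by auto
  then have "a \<in> ?S"
    unfolding a_def by (intro Max_in) auto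
  then have a: "start a" "a \<le> c"
    by auto
  have a_max: "\<And>b. b \<in> ?S \<Longrightarrow> b \<le> a"
    unfolding a_def by (intro Max_ge) auto
  have "c < next_start a"
  proof (rule ccontr)
    assume "\<not> c < next_start a"
    then have "next_start a \<in> ?S"
      using next_start(4)[OF a(1)] assms by auto
    then show False
      using a_max next_start(1)[OF a(1)] by fastforce
  qed
  then show ?thesis
    using a that by blast
qed

lemma run_union_imp_in_marked_interior:
  assumes "y \<in> run_union"
  shows "in_marked_interior T n (y * real n)"
proof -
  obtain a where a: "start a" "T a"
    and "y \<in> {(real a - 1) / real n <..< (real (next_start a) - 1) / real n}"
    using assms unfolding run_union_def by blast
  then have y: "real a - 1 < y * real n" "y * real n < real (next_start a) - 1"
    using two_le_n by (simp_all add: field_simps)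
  have a_ge1: "1 \<le> a" and nxt: "next_start a \<le> n + 1"
    using a(1) start_iff next_start(2) by auto
  define k where "k = nat \<lfloor>y * real n\<rfloor>"
  have k: "real k \<le> y * real n" "y * real n < real k + 1"
    using y a_ge1 unfolding k_def by (simp_all add: of_nat_nat)
  show ?thesis
  proof (cases "y * real n = real k")
    case True
    then have "a \<le> k" "Suc k < next_start a"
      using y by linarith+
    then have "T k = T a" "T (Suc k) = T a"
      using label_constant_on_run[OF a(1), of k] label_constant_on_run[OF a(1), of "Suc k"]
      by simp_all
    moreover have "k \<in> {1..n-1}"
      using \<open>a \<le> k\<close> \<open>Suc k < next_start a\<close> a_ge1 nxt by simp
    ultimately show ?thesis
      using True a(2) unfolding in_marked_interior_def by (intro disjI2 bexI[of _ k]) simp_all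
  next
    case False
    then have "a \<le> Suc k" "Suc k < next_start a"
      using y k by linarith+
    then have "T (Suc k) = T a" "Suc k \<in> {1..n}"
      using label_constant_on_run[OF a(1), of "Suc k"] nxt by simp_all
    then show ?thesis
      using False k a(2) unfolding in_marked_interior_def by (intro disjI1 bexI[of _ "Suc k"]) simp_all
  qed
qed

lemma in_marked_interior_imp_run_union:
  assumes "in_marked_interior T n (y * real n)"
  shows "y \<in> run_union"
proof -
  have "\<exists>a. start a \<and> T a \<and> real a - 1 < y * real n \<and> y * real n < real (next_start a) - 1"
    using assms
  proof (cases rule: in_marked_interiorE)
    case (cell i)
    obtain a where a: "start a" "a \<le> i" "i < next_start a"
      using run_containing[of i] cell(1) by auto
    then show ?thesis
      using cell label_constant_on_run[OF a] by (intro exI[of _ a]) auto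
  next
    case (wall i)
    have "1 \<le> Suc i" "Suc i \<le> n"
      using wall(1) by auto
    then obtain a where a: "start a" "a \<le> Suc i" "Suc i < next_start a"
      by (rule run_containing)
    have "\<not> start (Suc i)"
      using wall start_iff by auto
    then have "a \<le> i"
      using a by (cases "a = Suc i") auto
    then show ?thesis
      using a wall label_constant_on_run[OF a(1) \<open>a \<le> i\<close>] by (intro exI[of _ a]) auto
  qed
  then show ?thesis
    using two_le_n by (auto simp: run_union_def field_simps)
qed

lemma run_union_eq_interior: "run_union = interior (marked_cells (real n) T n)"
proof -
  have "real n > 0"
    using two_le_n by simp
  then show ?thesis
    using run_union_imp_in_marked_interior in_marked_interior_imp_run_union
      in_marked_interior_imp_interior interior_imp_in_marked_interior by blast
qed

end

lemma in_marked_interior_mono: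
  assumes "N \<le> M" and "\<And>i. 1 \<le> i \<Longrightarrow> i \<le> N \<Longrightarrow> T i \<Longrightarrow> T' i"
    and "in_marked_interior T N v"
  shows "in_marked_interior T' M v"
  using assms(3)
proof (cases rule: in_marked_interiorE)
  case (cell i)
  then show ?thesis
    using assms(1) assms(2)[of i] unfolding in_marked_interior_def by (intro disjI1 bexI[of _ i]) auto
next
  case (wall i)
  then show ?thesis
    using assms(1) assms(2)[of i] assms(2)[of "Suc i"]
    unfolding in_marked_interior_def by (intro disjI2 bexI[of _ i]) auto
qed

lemma in_marked_interior_truncate:
  assumes "v \<le> real N" and "\<And>i. 1 \<le> i \<Longrightarrow> i \<le> N \<Longrightarrow> T' i \<Longrightarrow> T i"
    and "\<not> (T' N \<and> T' (Suc N))" and "in_marked_interior T' M v"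
  shows "in_marked_interior T N v"
  using assms(4)
proof (cases rule: in_marked_interiorE)
  case (cell i)
  then have "i \<le> N"
    using assms(1) by linarith
  then show ?thesis
    using cell assms(2)[of i] unfolding in_marked_interior_def by (intro disjI1 bexI[of _ i]) auto
next
  case (wall i)
  then have "i \<noteq> N" "i \<le> N"
    using assms(1,3) by auto
  then have "Suc i \<le> N"
    by simp
  then show ?thesis
    using wall assms(2)[of i] assms(2)[of "Suc i"]
    unfolding in_marked_interior_def by (intro disjI2 bexI[of _ i]) auto
qed

lemma cmpl01_interior_marked_cells:
  "d > 0 \<Longrightarrow> cmpl01 (interior (marked_cells d T N)) = {x \<in> {0..1}. \<not> in_marked_interior T N (x * d)}"
  unfolding cmpl01_def
  using in_marked_interior_imp_interior interior_imp_in_marked_interior by blast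

context
  fixes n :: nat and T T' :: "nat \<Rightarrow> bool"
  assumes two_le_n: "2 \<le> n"
    and same_labels: "\<And>i. 1 \<le> i \<Longrightarrow> i < n \<Longrightarrow> T' i = T i"
    and last_label_flipped: "T' n \<longleftrightarrow> \<not> T (n - 1)"
begin

lemma coarse_gap_near_fine_gap:
  assumes "x \<in> {0..1}" "\<not> in_marked_interior T (n - 1) (x * (real n - 1))"
  shows "\<exists>y \<in> {y \<in> {0..1}. \<not> in_marked_interior T' n (y * real n)}. dist x y \<le> 1 / real n"
proof
  define y where "y = x * (real n - 1) / real n"
  have n: "real n \<ge> 2" "real (n - 1) = real n - 1"
    using two_le_n by auto
  have u: "x * (real n - 1) \<le> real (n - 1)"
    using assms(1) n by (simp add: mult_left_le_one_le)
  then have "x * (real n - 1) \<le> real n"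
    using n by linarith
  then have "y \<in> {0..1}"
    using assms(1) n by (auto simp: y_def pos_divide_le_eq)
  moreover have "\<not> in_marked_interior T' n (x * (real n - 1))"
    using in_marked_interior_truncate[OF u, of T' T n] assms(2) same_labels last_label_flipped two_le_n
    by force
  moreover have "y * real n = x * (real n - 1)"
    using n by (simp add: y_def)
  ultimately show "y \<in> {y \<in> {0..1}. \<not> in_marked_interior T' n (y * real n)}"
    by simp
  have "x - y = x / real n"
    using n by (simp add: y_def field_simps)
  then show "dist x y \<le> 1 / real n"
    using assms(1) n by (simp add: dist_real_def divide_right_mono)
qed

lemma fine_gap_near_coarse_gap:
  assumes "y \<in> {0..1}" "\<not> in_marked_interior T' n (y * real n)"
  shows "\<exists>x \<in> {x \<in> {0..1}. \<not> in_marked_interior T (n - 1) (x * (real n - 1))}. dist y x \<le> 1 / real n"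
proof -
  have n: "real n \<ge> 2" "real (n - 1) = real n - 1"
    using two_le_n by auto
  show ?thesis
  proof (cases "y * real n \<le> real n - 1")
    case True
    define x where "x = y * real n / (real n - 1)"
    have "\<not> in_marked_interior T (n - 1) (y * real n)"
      using in_marked_interior_mono[of "n - 1" n T T'] assms(2) same_labels by force
    moreover have "x * (real n - 1) = y * real n"
      using n by (simp add: x_def)
    moreover have "x \<in> {0..1}"
      using True assms(1) n by (auto simp: x_def field_simps)
    moreover have "dist y x \<le> 1 / real n"
    proof -
      have "x - y = y / (real n - 1)"
        using n by (simp add: x_def field_simps)
      moreover have "y / (real n - 1) \<le> 1 / real n"
        using True n by (simp add: field_simps)
      moreover have "0 \<le> y / (real n - 1)"
        using assms(1) n by simp
      ultimately show ?thesis
        by (simp add: dist_real_def)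
    qed
    ultimately show ?thesis
      by (intro bexI[of _ x]) auto
  next
    case False
    have "\<not> in_marked_interior T (n - 1) (1 * (real n - 1))"
      using not_in_marked_interior_right_end[of T "n - 1"] n by simp
    moreover have "dist y 1 \<le> 1 / real n"
      using False assms(1) n by (auto simp: dist_real_def field_simps)
    ultimately show ?thesis
      by (intro bexI[of _ 1]) auto
  qed
qed

lemma haus_dist_refined_grid:
  "haus_dist (cmpl01 (interior (marked_cells (real n - 1) T (n - 1))))
             (cmpl01 (interior (marked_cells (real n) T' n))) \<le> 1 / real n"
proof -
  have "real n - 1 > 0" "real n > 0"
    using two_le_n by auto
  then show ?thesis
    unfolding cmpl01_interior_marked_cells[OF \<open>real n - 1 > 0\<close>]
      cmpl01_interior_marked_cells[OF \<open>real n > 0\<close>]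
    using coarse_gap_near_fine_gap fine_gap_near_coarse_gap
    by (intro haus_dist_le) (auto simp: not_in_marked_interior_0 intro!: exI[of _ 0])
qed

end

lemma descent_set_subset:
  assumes "is_composition n lam"
  shows "descent_set lam \<subseteq> {1..n-1}"
proof
  fix s assume "s \<in> descent_set lam"
  then obtain k where k: "s = sum_list (take k lam)" "1 \<le> k" "k \<le> length lam - 1"
    unfolding descent_set_def by blast
  have pos: "1 \<le> sum_list xs" if "set xs \<subseteq> set lam" "xs \<noteq> []" for xs
  proof -
    have "0 < hd xs"
      using that assms hd_in_set[of xs] unfolding is_composition_def by blast
    then show ?thesis
      using member_le_sum_list[OF hd_in_set[OF that(2)]] by linarith
  qed
  have "1 \<le> sum_list (take k lam)"
    by (rule pos) (use k in \<open>auto dest: in_set_takeD\<close>)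
  moreover have "1 \<le> sum_list (drop k lam)"
    by (rule pos) (use k in \<open>auto dest: in_set_dropD\<close>)
  moreover have "sum_list (take k lam) + sum_list (drop k lam) = n"
    using assms unfolding is_composition_def by (metis append_take_drop_id sum_list_append)
  ultimately show "s \<in> {1..n-1}"
    using k by auto
qed

text \<open>The labelling of the run paintbox: cell \<open>i\<close> lies in its first component. For \<open>i < n\<close>
  this means that \<open>i\<close> is an ascent; the last cell forms a run of its own, which starts at a
  valley exactly when \<open>n - 1\<close> is a descent.\<close>
definition up_cell :: "nat \<Rightarrow> nat set \<Rightarrow> nat \<Rightarrow> bool" where
  "up_cell n D i \<longleftrightarrow> (i < n \<and> i \<notin> D) \<or> (i = n \<and> n - 1 \<in> D)"

context
  fixes n :: nat and lam :: "nat list"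
  assumes two_le_n: "2 \<le> n" and composition: "is_composition n lam"
begin

lemma is_valley_iff:
  "is_valley n lam a \<longleftrightarrow>
     (a \<in> {1..n} \<and> (a = 1 \<or> up_cell n (descent_set lam) a \<noteq> up_cell n (descent_set lam) (a - 1)))
     \<and> up_cell n (descent_set lam) a"
  using two_le_n descent_set_subset[OF composition] unfolding is_valley_def up_cell_def
  by (cases "a = 1"; cases "a = n") auto

lemma is_peak_iff:
  "is_peak n lam a \<longleftrightarrow>
     (a \<in> {1..n} \<and> (a = 1 \<or> up_cell n (descent_set lam) a \<noteq> up_cell n (descent_set lam) (a - 1)))
     \<and> \<not> up_cell n (descent_set lam) a"
  using two_le_n descent_set_subset[OF composition] unfolding is_peak_def up_cell_def
  by (cases "a = 1"; cases "a = n") auto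

lemma run_paintbox_eq_interiors:
  "run_paintbox n lam =
     (interior (marked_cells (real n) (up_cell n (descent_set lam)) n),
      interior (marked_cells (real n) (\<lambda>i. \<not> up_cell n (descent_set lam) i) n))"
proof -
  let ?up = "up_cell n (descent_set lam)"
  let ?start = "\<lambda>a. is_peak n lam a \<or> is_valley n lam a"
  have start_iff: "?start a \<longleftrightarrow> a \<in> {1..n} \<and> (a = 1 \<or> ?up a \<noteq> ?up (a - 1))" for a
    using is_valley_iff is_peak_iff by blast
  have last: "?up n \<noteq> ?up (n - 1)"
    using two_le_n by (auto simp: up_cell_def)
  interpret up_runs: labelled_runs n ?up ?start "pv_next n lam"
    using two_le_n start_iff last by unfold_locales (auto simp: pv_next_def)
  interpret down_runs: labelled_runs n "\<lambda>i. \<not> ?up i" ?start "pv_next n lam"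
    using two_le_n start_iff last by unfold_locales (auto simp: pv_next_def)
  have "{a. is_valley n lam a} = {a. ?start a \<and> ?up a}"
    and "{a. is_peak n lam a} = {a. ?start a \<and> \<not> ?up a}"
    using is_valley_iff is_peak_iff start_iff by blast+
  then show ?thesis
    using up_runs.run_union_eq_interior down_runs.run_union_eq_interior
    unfolding run_paintbox_def up_runs.run_union_def down_runs.run_union_def by simp
qed

end

lemma U_comp_eq_interiors:
  "U_comp n lam =
     (interior (marked_cells (real n - 1) (\<lambda>s. s \<notin> descent_set lam) (n - 1)),
      interior (marked_cells (real n - 1) (\<lambda>s. s \<in> descent_set lam) (n - 1)))"
  by (simp add: U_comp_def marked_cells_def I_int_def)

theorem lemma11:
  fixes n :: nat and lam :: "nat list"
  assumes "n \<ge> 2" and "is_composition n lam"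
  shows "U2_dist (U_comp n lam) (run_paintbox n lam) \<le> 1 / real n"
proof -
  have "haus_dist (cmpl01 (fst (U_comp n lam))) (cmpl01 (fst (run_paintbox n lam))) \<le> 1 / real n"
    unfolding U_comp_eq_interiors run_paintbox_eq_interiors[OF assms] fst_conv
    by (rule haus_dist_refined_grid) (use assms(1) in \<open>simp_all add: up_cell_def\<close>)
  moreover
  have "haus_dist (cmpl01 (snd (U_comp n lam))) (cmpl01 (snd (run_paintbox n lam))) \<le> 1 / real n"
    unfolding U_comp_eq_interiors run_paintbox_eq_interiors[OF assms] snd_conv
    by (rule haus_dist_refined_grid) (use assms(1) in \<open>simp_all add: up_cell_def\<close>)
  ultimately show ?thesis
    unfolding U2_dist_def by simp
qed

end
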